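(* Let $G$ be a finite group and $H\subset G$ a subgroup. Let $\xi$ be a pure state of a system carrying a projective unitary representation $U$ of $G$, which is a uniform state with symmetry $H$, i.e. $\chi_\xi(g)=1$ for $g\in H$ and $\chi_\xi(g)=0$ for $g\notin H$. Let $|\phi\rangle$ be any pure state of a system carrying a projective unitary representation $U'$ of $G$ with $H\subset\mathrm{Sym}_G(\phi)$. Then for every positive integer $M$ there exists a CPTP map $\Lambda$, covariant w.r.t. $U$ and $U'^{\otimes M}$, with $\Lambda(\xi)=\phi^{\otimes M}$.
   Context: $\chi_\xi(g)=\langle\xi|U(g)|\xi\rangle$; $\mathrm{Sym}_G(\phi)=\{g: U'(g)\phi U'(g)^\dagger=\phi\}$ with $\phi=|\phi\rangle\langle\phi|$. A projective unitary representation satisfies $U(g)U(g')=e^{i\omega(g,g')}U(gg')$. A CPTP map $\Lambda$ is covariant w.r.t. input representation $U$ and output representation $V$ if $V(g)\Lambda(X)V(g)^\dagger=\Lambda(U(g)XU(g)^\dagger)$ for all $g\in G$. *)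

theory Defs
  imports "HOL-Algebra.Group" "Jordan_Normal_Form.Matrix" "Jordan_Normal_Form.Conjugate"
begin

definition adj :: "complex mat \<Rightarrow> complex mat" where
  "adj A = mat (dim_col A) (dim_row A) (\<lambda>(i,j). cnj (A $$ (j,i)))"

definition ketbra :: "complex vec \<Rightarrow> complex mat" where
  "ketbra v = mat (dim_vec v) (dim_vec v) (\<lambda>(i,j). v $ i * cnj (v $ j))"

definition pure_state :: "nat \<Rightarrow> complex vec \<Rightarrow> bool" where
  "pure_state d v \<longleftrightarrow> v \<in> carrier_vec d \<and> v \<bullet>c v = 1"

definition unitary_mat :: "nat \<Rightarrow> complex mat \<Rightarrow> bool" where
  "unitary_mat d A \<longleftrightarrow> A \<in> carrier_mat d d \<and> adj A * A = 1\<^sub>m d"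

definition kron :: "complex mat \<Rightarrow> complex mat \<Rightarrow> complex mat" where
  "kron A B = mat (dim_row A * dim_row B) (dim_col A * dim_col B)
     (\<lambda>(i,j). A $$ (i div dim_row B, j div dim_col B) * B $$ (i mod dim_row B, j mod dim_col B))"

fun kron_pow :: "complex mat \<Rightarrow> nat \<Rightarrow> complex mat" where
  "kron_pow A 0 = 1\<^sub>m 1"
| "kron_pow A (Suc M) = kron A (kron_pow A M)"

definition proj_unitary_rep :: "('g, 'b) monoid_scheme \<Rightarrow> nat \<Rightarrow> ('g \<Rightarrow> complex mat) \<Rightarrow> bool" where
  "proj_unitary_rep G d U \<longleftrightarrow>
     (\<forall>g\<in>carrier G. unitary_mat d (U g)) \<and>
     (\<exists>\<omega> :: 'g \<Rightarrow> 'g \<Rightarrow> real. \<forall>g\<in>carrier G. \<forall>g'\<in>carrier G.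
        U g * U g' = exp (\<i> * complex_of_real (\<omega> g g')) \<cdot>\<^sub>m U (g \<otimes>\<^bsub>G\<^esub> g'))"

definition char_fun :: "('g \<Rightarrow> complex mat) \<Rightarrow> complex vec \<Rightarrow> 'g \<Rightarrow> complex" where
  "char_fun U \<xi> g = (U g *\<^sub>v \<xi>) \<bullet>c \<xi>"

definition Sym :: "('g, 'b) monoid_scheme \<Rightarrow> ('g \<Rightarrow> complex mat) \<Rightarrow> complex vec \<Rightarrow> 'g set" where
  "Sym G U \<phi> = {g \<in> carrier G. U g * ketbra \<phi> * adj (U g) = ketbra \<phi>}"

definition psd :: "nat \<Rightarrow> complex mat \<Rightarrow> bool" where
  "psd n A \<longleftrightarrow> A \<in> carrier_mat n n \<and>
     (\<forall>v\<in>carrier_vec n. Im ((A *\<^sub>v v) \<bullet>c v) = 0 \<and> Re ((A *\<^sub>v v) \<bullet>c v) \<ge> 0)"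

text \<open>(id_k \<otimes> Lambda) applied to a (k*n) x (k*n) matrix viewed as k x k blocks of
  n x n matrices; the output is (k*m) x (k*m).\<close>
definition block :: "nat \<Rightarrow> complex mat \<Rightarrow> nat \<Rightarrow> nat \<Rightarrow> complex mat" where
  "block n X a b = mat n n (\<lambda>(p,q). X $$ (a * n + p, b * n + q))"

definition id_tensor :: "nat \<Rightarrow> nat \<Rightarrow> nat \<Rightarrow> (complex mat \<Rightarrow> complex mat) \<Rightarrow> complex mat \<Rightarrow> complex mat" where
  "id_tensor k n m \<Lambda> X = mat (k * m) (k * m)
     (\<lambda>(i,j). \<Lambda> (block n X (i div m) (j div m)) $$ (i mod m, j mod m))"

definition linear_map :: "nat \<Rightarrow> nat \<Rightarrow> (complex mat \<Rightarrow> complex mat) \<Rightarrow> bool" where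
  "linear_map n m \<Lambda> \<longleftrightarrow>
     (\<forall>X\<in>carrier_mat n n. \<Lambda> X \<in> carrier_mat m m) \<and>
     (\<forall>X\<in>carrier_mat n n. \<forall>Y\<in>carrier_mat n n. \<Lambda> (X + Y) = \<Lambda> X + \<Lambda> Y) \<and>
     (\<forall>c. \<forall>X\<in>carrier_mat n n. \<Lambda> (c \<cdot>\<^sub>m X) = c \<cdot>\<^sub>m \<Lambda> X)"

definition completely_positive :: "nat \<Rightarrow> nat \<Rightarrow> (complex mat \<Rightarrow> complex mat) \<Rightarrow> bool" where
  "completely_positive n m \<Lambda> \<longleftrightarrow>
     (\<forall>k>0. \<forall>X. psd (k * n) X \<longrightarrow> psd (k * m) (id_tensor k n m \<Lambda> X))"

definition mtrace :: "complex mat \<Rightarrow> complex" where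
  "mtrace A = (\<Sum>i<dim_row A. A $$ (i,i))"

definition trace_preserving :: "nat \<Rightarrow> (complex mat \<Rightarrow> complex mat) \<Rightarrow> bool" where
  "trace_preserving n \<Lambda> \<longleftrightarrow> (\<forall>X\<in>carrier_mat n n. mtrace (\<Lambda> X) = mtrace X)"

definition CPTP :: "nat \<Rightarrow> nat \<Rightarrow> (complex mat \<Rightarrow> complex mat) \<Rightarrow> bool" where
  "CPTP n m \<Lambda> \<longleftrightarrow> linear_map n m \<Lambda> \<and> completely_positive n m \<Lambda> \<and> trace_preserving n \<Lambda>"

definition covariant :: "('g, 'b) monoid_scheme \<Rightarrow> nat \<Rightarrow> ('g \<Rightarrow> complex mat) \<Rightarrow> ('g \<Rightarrow> complex mat)
     \<Rightarrow> (complex mat \<Rightarrow> complex mat) \<Rightarrow> bool" where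
  "covariant G n U V \<Lambda> \<longleftrightarrow>
     (\<forall>g\<in>carrier G. \<forall>X\<in>carrier_mat n n. V g * \<Lambda> X * adj (V g) = \<Lambda> (U g * X * adj (U g)))"

end

theory Submission
  imports Defs "Jordan_Normal_Form.Determinant"
begin

(* Write psi g = U(g) xi. The character values of xi make <psi g|psi g'> vanish unless
   g^-1 g' is in H, in which case psi g' is psi g up to a phase; hence
   P = |H|^-1 sum_g |psi g><psi g| is a U-invariant orthogonal projection. Measuring the
   covariant POVM {|H|^-1 |psi g><psi g| + |G|^-1 (1 - P)}_g and preparing
   (U'(g) phi)^{tensor M} on outcome g is a covariant CPTP map. On input xi only outcomes
   g in H occur, and for those the prepared state is phi^{tensor M}, because H fixes phi
   up to a phase. *)

lemma sum_lessThan_mult: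
  fixes f :: "nat \<Rightarrow> 'a::comm_monoid_add"
  shows "(\<Sum>i<k*m. f i) = (\<Sum>c<k. \<Sum>p<m. f (c*m+p))"
proof -
  have "(\<Sum>i<k*m. f i) = (\<Sum>c<k. \<Sum>i\<in>{c*m..<c*m+m}. f i)"
    by (rule sum.nat_group[symmetric])
  also have "\<dots> = (\<Sum>c<k. \<Sum>p<m. f (c*m+p))"
    by (rule sum.cong[OF refl])
       (simp add: sum.atLeastLessThan_shift_0[of _ "c*m" for c] atLeast0LessThan comp_def)
  finally show ?thesis .
qed

lemma sum_lessThan_mult_div_mod:
  fixes f :: "nat \<Rightarrow> nat \<Rightarrow> 'a::comm_monoid_add"
  assumes "0 < m"
  shows "(\<Sum>i<k*m. f (i div m) (i mod m)) = (\<Sum>c<k. \<Sum>p<m. f c p)"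
  unfolding sum_lessThan_mult by (rule sum.cong, simp, rule sum.cong) (use assms in auto)

lemma mult_add_less_mult[simp]: "c < k \<Longrightarrow> p < m \<Longrightarrow> c*m+p < k*(m::nat)"
proof -
  assume "c < k" "p < m"
  then have "c*m+p < (c+1)*m" by simp
  also have "\<dots> \<le> k*m" using \<open>c < k\<close> by (intro mult_right_mono) auto
  finally show ?thesis .
qed

lemma mod_less_of_less_mult: "i < k * (m::nat) \<Longrightarrow> i mod m < m"
  by (cases "m = 0") auto

lemma sum_if_const:
  assumes "finite A"
  shows "(\<Sum>x\<in>A. if P x then a else 0) = of_nat (card {x\<in>A. P x}) * (a::'a::semiring_1)"
  using sum.inter_filter[OF assms, of "\<lambda>_. a" P] by simp

lemma cscalar_prod_expand:
  fixes x y :: "complex vec"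
  assumes "x \<in> carrier_vec n" "y \<in> carrier_vec n"
  shows "x \<bullet>c y = (\<Sum>i<n. x$i * cnj (y$i))"
  using assms by (auto simp: scalar_prod_def atLeast0LessThan)

lemma cscalar_prod_smult:
  fixes x y :: "complex vec"
  assumes x: "x \<in> carrier_vec n" and y: "y \<in> carrier_vec n"
  shows "(a \<cdot>\<^sub>v x) \<bullet>c (b \<cdot>\<^sub>v y) = a * cnj b * (x \<bullet>c y)"
proof -
  have "a \<cdot>\<^sub>v x \<in> carrier_vec n" and "b \<cdot>\<^sub>v y \<in> carrier_vec n" using x y by auto
  then show ?thesis unfolding cscalar_prod_expand[OF x y] using x y
    by (simp add: cscalar_prod_expand[of _ n] sum_distrib_left mult_ac)
qed

lemma cscalar_prod_smult_left:
  fixes x y :: "complex vec"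
  assumes "x \<in> carrier_vec n" and "y \<in> carrier_vec n"
  shows "(a \<cdot>\<^sub>v x) \<bullet>c y = a * (x \<bullet>c y)"
  using cscalar_prod_smult[OF assms, of a 1] by simp

lemma cscalar_prod_swap:
  fixes x y :: "complex vec"
  assumes x: "x \<in> carrier_vec n" and y: "y \<in> carrier_vec n"
  shows "x \<bullet>c y = cnj (y \<bullet>c x)"
  unfolding cscalar_prod_expand[OF x y] cscalar_prod_expand[OF y x] by (simp add: cnj_sum mult_ac)

lemma dim_pos_of_unit_vec: "(v::complex vec) \<in> carrier_vec n \<Longrightarrow> v \<bullet>c v = 1 \<Longrightarrow> 0 < n"
  by (rule ccontr) (auto simp: cscalar_prod_expand[of v n v])

lemma unit_vec_eq_of_cscalar_prod_eq_1:
  fixes x y :: "complex vec"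
  assumes x: "x \<in> carrier_vec n" and y: "y \<in> carrier_vec n"
    and xx: "x \<bullet>c x = 1" and yy: "y \<bullet>c y = 1" and xy: "x \<bullet>c y = 1"
  shows "x = y"
proof -
  have yx: "y \<bullet>c x = 1" using cscalar_prod_swap[OF y x] xy by simp
  have d: "x - y \<in> carrier_vec n" using x y by simp
  have "(x - y) \<bullet>c (x - y) = x \<bullet>c x - x \<bullet>c y - y \<bullet>c x + y \<bullet>c y"
    using x y by (simp add: cscalar_prod_expand[of _ n] sum_subtractf sum.distrib algebra_simps)
  also have "\<dots> = 0" using xx yy xy yx by simp
  finally have "(\<Sum>i<n. complex_of_real ((cmod ((x - y)$i))^2)) = 0"
    unfolding cscalar_prod_expand[OF d d] complex_norm_square .
  then have "(\<Sum>i<n. (cmod ((x - y)$i))^2) = 0" by (simp only: of_real_sum[symmetric] of_real_eq_0_iff)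
  then have "\<forall>i\<in>{..<n}. (cmod ((x - y)$i))^2 = 0" by (subst sum_nonneg_eq_0_iff[symmetric]) auto
  then show ?thesis using x y by (intro eq_vecI) auto
qed

lemma adj_carrier[simp]: "A \<in> carrier_mat r c \<Longrightarrow> adj A \<in> carrier_mat c r"
  unfolding adj_def by auto

lemma adj_index[simp]: "i < dim_col A \<Longrightarrow> j < dim_row A \<Longrightarrow> adj A $$ (i,j) = cnj (A $$ (j,i))"
  unfolding adj_def by auto

lemma adj_dims[simp]: "dim_row (adj A) = dim_col A" "dim_col (adj A) = dim_row A"
  unfolding adj_def by auto

lemma adj_mult:
  assumes A: "A \<in> carrier_mat n k" and B: "B \<in> carrier_mat k m"
  shows "adj (A * B) = adj B * adj A"
  by (rule eq_matI) (use A B in \<open>auto simp: scalar_prod_def atLeast0LessThan cnj_sum mult_ac\<close>)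

lemma cscalar_prod_mult_mat_vec_adj:
  assumes A: "A \<in> carrier_mat r c" and x: "x \<in> carrier_vec c" and y: "y \<in> carrier_vec r"
  shows "(A *\<^sub>v x) \<bullet>c y = x \<bullet>c (adj A *\<^sub>v y)"
proof -
  have "(A *\<^sub>v x) \<bullet>c y = (\<Sum>i<r. \<Sum>j<c. A$$(i,j) * x$j * cnj (y$i))"
    using assms by (subst cscalar_prod_expand[of _ r])
      (auto simp: scalar_prod_def atLeast0LessThan sum_distrib_right)
  also have "\<dots> = (\<Sum>j<c. \<Sum>i<r. A$$(i,j) * x$j * cnj (y$i))" by (rule sum.swap)
  also have "\<dots> = x \<bullet>c (adj A *\<^sub>v y)"
    using assms mult_mat_vec_carrier[OF adj_carrier[OF A] y]
    by (subst cscalar_prod_expand[of _ c])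
      (auto simp: scalar_prod_def atLeast0LessThan sum_distrib_left cnj_sum mult_ac)
  finally show ?thesis .
qed

lemma unitary_adj_mult_vec:
  assumes "unitary_mat n A" and x: "x \<in> carrier_vec n"
  shows "adj A *\<^sub>v (A *\<^sub>v x) = x"
proof -
  have A: "A \<in> carrier_mat n n" and AA: "adj A * A = 1\<^sub>m n"
    using assms(1) unfolding unitary_mat_def by auto
  have "adj A *\<^sub>v (A *\<^sub>v x) = (adj A * A) *\<^sub>v x"
    by (rule assoc_mult_mat_vec[symmetric, of _ n n _ n]) (use A x in auto)
  then show ?thesis using AA x by simp
qed

lemma unitary_mult_adj:
  assumes "unitary_mat n A"
  shows "A * adj A = 1\<^sub>m n"
  using assms mat_mult_left_right_inverse[of "adj A" n A] unfolding unitary_mat_def by auto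

lemma unitary_cscalar_prod:
  assumes U: "unitary_mat n A" and x: "x \<in> carrier_vec n" and y: "y \<in> carrier_vec n"
  shows "(A *\<^sub>v x) \<bullet>c (A *\<^sub>v y) = x \<bullet>c y"
proof -
  have A: "A \<in> carrier_mat n n" using U unfolding unitary_mat_def by auto
  have "(A *\<^sub>v x) \<bullet>c (A *\<^sub>v y) = x \<bullet>c (adj A *\<^sub>v (A *\<^sub>v y))"
    using A x y by (intro cscalar_prod_mult_mat_vec_adj) auto
  then show ?thesis using unitary_adj_mult_vec[OF U y] by simp
qed

lemma smult_mat_mult_vec:
  "A \<in> carrier_mat nr nc \<Longrightarrow> v \<in> carrier_vec nc \<Longrightarrow> (k \<cdot>\<^sub>m A) *\<^sub>v v = k \<cdot>\<^sub>v (A *\<^sub>v v)"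
  by (rule eq_vecI) (auto simp: scalar_prod_def sum_distrib_left mult_ac)

definition quad_form :: "complex vec \<Rightarrow> complex mat \<Rightarrow> complex" where
  "quad_form a X = (X *\<^sub>v a) \<bullet>c a"

lemma quad_form_expand:
  assumes "X \<in> carrier_mat n n" "a \<in> carrier_vec n"
  shows "quad_form a X = (\<Sum>s<n. \<Sum>s'<n. X$$(s,s') * a$s' * cnj (a$s))"
  using assms unfolding quad_form_def
  by (auto simp: scalar_prod_def atLeast0LessThan sum_distrib_right)

lemma quad_form_add:
  assumes X: "X \<in> carrier_mat n n" and Y: "Y \<in> carrier_mat n n" and a: "a \<in> carrier_vec n"
  shows "quad_form a (X + Y) = quad_form a X + quad_form a Y"
proof -
  have "X + Y \<in> carrier_mat n n" using X Y by simp
  then show ?thesis using assms by (simp add: quad_form_expand[of _ n] sum.distrib distrib_right)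
qed

lemma quad_form_smult_mat:
  assumes X: "X \<in> carrier_mat n n" and a: "a \<in> carrier_vec n"
  shows "quad_form a (c \<cdot>\<^sub>m X) = c * quad_form a X"
  using assms unfolding quad_form_expand[OF X a] quad_form_expand[OF smult_carrier_mat[OF X] a]
  by (simp add: sum_distrib_left mult_ac)

lemma quad_form_smult_vec:
  assumes X: "X \<in> carrier_mat n n" and a: "a \<in> carrier_vec n"
  shows "quad_form (c \<cdot>\<^sub>v a) X = complex_of_real ((cmod c)^2) * quad_form a X"
proof -
  have "complex_of_real ((cmod c)^2) = c * cnj c" by (rule complex_norm_square)
  then show ?thesis using assms
    unfolding quad_form_expand[OF X a] quad_form_expand[OF X smult_carrier_vec[THEN iffD2, OF a]]
    by (simp add: sum_distrib_left mult_ac)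
qed

lemma quad_form_smult_sqrt:
  assumes "X \<in> carrier_mat n n" and "a \<in> carrier_vec n" and "0 \<le> r"
  shows "quad_form (complex_of_real (sqrt r) \<cdot>\<^sub>v a) X = complex_of_real r * quad_form a X"
proof -
  have "(cmod (complex_of_real (sqrt r)))^2 = r" using assms(3) by simp
  then show ?thesis unfolding quad_form_smult_vec[OF assms(1,2)] by simp
qed

lemma quad_form_conj:
  assumes A: "A \<in> carrier_mat n n" and X: "X \<in> carrier_mat n n" and a: "a \<in> carrier_vec n"
  shows "quad_form a (A * X * adj A) = quad_form (adj A *\<^sub>v a) X"
proof -
  have Aa: "adj A *\<^sub>v a \<in> carrier_vec n" using mult_mat_vec_carrier[OF adj_carrier[OF A] a] .
  have "(A * X * adj A) *\<^sub>v a = (A * X) *\<^sub>v (adj A *\<^sub>v a)"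
    by (rule assoc_mult_mat_vec[of _ n n _ n]) (use assms in auto)
  also have "\<dots> = A *\<^sub>v (X *\<^sub>v (adj A *\<^sub>v a))"
    by (rule assoc_mult_mat_vec[of _ n n _ n]) (use assms Aa in auto)
  finally have "(A * X * adj A) *\<^sub>v a = A *\<^sub>v (X *\<^sub>v (adj A *\<^sub>v a))" .
  then show ?thesis unfolding quad_form_def using A X Aa a
    by (simp add: cscalar_prod_mult_mat_vec_adj[of A n n])
qed

lemma mtrace_mult_expand:
  assumes "X \<in> carrier_mat n n" "R \<in> carrier_mat n n"
  shows "mtrace (X * R) = (\<Sum>s<n. \<Sum>s'<n. X$$(s,s') * R$$(s',s))"
  using assms by (auto simp: mtrace_def scalar_prod_def atLeast0LessThan intro!: sum.cong)

lemma mtrace_mult_minus: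
  assumes X: "X \<in> carrier_mat n n" and R: "R \<in> carrier_mat n n" and S: "S \<in> carrier_mat n n"
  shows "mtrace (X * (R - S)) = mtrace (X * R) - mtrace (X * S)"
proof -
  have "R - S \<in> carrier_mat n n" using minus_carrier_mat[OF S] R by simp
  then show ?thesis using R S
    by (simp add: mtrace_mult_expand[OF X] sum_subtractf right_diff_distrib)
qed

lemma mtrace_mult_outer_sum:
  assumes X: "X \<in> carrier_mat n n" and b: "\<And>j. j \<in> J \<Longrightarrow> b j \<in> carrier_vec n"
  shows "mtrace (X * mat n n (\<lambda>(p,q). \<Sum>j\<in>J. c j * (b j $ p * cnj (b j $ q))))
       = (\<Sum>j\<in>J. c j * quad_form (b j) X)"
proof -
  have "mtrace (X * mat n n (\<lambda>(p,q). \<Sum>j\<in>J. c j * (b j $ p * cnj (b j $ q))))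
      = (\<Sum>s<n. \<Sum>s'<n. \<Sum>j\<in>J. c j * (X$$(s,s') * b j $ s' * cnj (b j $ s)))"
    by (simp add: mtrace_mult_expand[OF X] sum_distrib_left mult_ac)
  also have "\<dots> = (\<Sum>s<n. \<Sum>j\<in>J. \<Sum>s'<n. c j * (X$$(s,s') * b j $ s' * cnj (b j $ s)))"
    by (rule sum.cong, simp, rule sum.swap)
  also have "\<dots> = (\<Sum>j\<in>J. \<Sum>s<n. \<Sum>s'<n. c j * (X$$(s,s') * b j $ s' * cnj (b j $ s)))"
    by (rule sum.swap)
  also have "\<dots> = (\<Sum>j\<in>J. c j * quad_form (b j) X)"
    by (rule sum.cong, simp) (simp add: quad_form_expand[OF X b] sum_distrib_left)
  finally show ?thesis .
qed

lemma sum_quad_form_col: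
  assumes B: "B \<in> carrier_mat n n" and X: "X \<in> carrier_mat n n"
  shows "(\<Sum>r<n. quad_form (col B r) X) = mtrace (X * (B * adj B))"
proof -
  have "(\<Sum>r<n. quad_form (col B r) X) = (\<Sum>r<n. \<Sum>s<n. \<Sum>s'<n. X$$(s,s') * (B$$(s',r) * cnj (B$$(s,r))))"
    by (rule sum.cong, simp) (use B in \<open>simp add: quad_form_expand[OF X] mult_ac\<close>)
  also have "\<dots> = (\<Sum>s<n. \<Sum>r<n. \<Sum>s'<n. X$$(s,s') * (B$$(s',r) * cnj (B$$(s,r))))"
    by (rule sum.swap)
  also have "\<dots> = (\<Sum>s<n. \<Sum>s'<n. \<Sum>r<n. X$$(s,s') * (B$$(s',r) * cnj (B$$(s,r))))"
    by (rule sum.cong, simp, rule sum.swap)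
  also have "\<dots> = mtrace (X * (B * adj B))"
    using B X by (simp add: mtrace_mult_expand[of _ n] scalar_prod_def atLeast0LessThan sum_distrib_left)
  finally show ?thesis .
qed

definition phase_equiv :: "complex vec \<Rightarrow> complex vec \<Rightarrow> bool" where
  "phase_equiv x y \<longleftrightarrow> (\<exists>e. cmod e = 1 \<and> x = e \<cdot>\<^sub>v y)"

lemma phase_equiv_outer_entry:
  assumes "phase_equiv x y" and "p < dim_vec y" and "q < dim_vec y"
  shows "x $ p * cnj (x $ q) = y $ p * cnj (y $ q)"
proof -
  obtain e where e: "cmod e = 1" "x = e \<cdot>\<^sub>v y" using assms(1) unfolding phase_equiv_def by blast
  have "e * cnj e = 1" using e(1) complex_norm_square[of e] by simp
  then show ?thesis using assms e(2) by (simp add: mult_ac)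
qed

lemma quad_form_phase_equiv:
  assumes "phase_equiv a b" and X: "X \<in> carrier_mat n n" and b: "b \<in> carrier_vec n"
  shows "quad_form a X = quad_form b X"
  using assms quad_form_smult_vec[OF X b] unfolding phase_equiv_def by auto

lemma phase_equiv_smult_mat_vec:
  assumes "phase_equiv x y" and "A \<in> carrier_mat n n" and "y \<in> carrier_vec n"
  shows "phase_equiv (A *\<^sub>v x) (A *\<^sub>v y)"
  using assms mult_mat_vec unfolding phase_equiv_def by metis

lemma phase_equiv_sym:
  assumes "phase_equiv x y"
  shows "phase_equiv y x"
proof -
  obtain e where e: "cmod e = 1" "x = e \<cdot>\<^sub>v y" using assms unfolding phase_equiv_def by blast
  moreover have "e \<noteq> 0" using e(1) by auto
  ultimately have "y = inverse e \<cdot>\<^sub>v x" by (auto simp: smult_smult_assoc)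
  moreover have "cmod (inverse e) = 1" using e(1) by (simp add: norm_inverse)
  ultimately show ?thesis unfolding phase_equiv_def by blast
qed

lemma ketbra_carrier[simp]: "ketbra v \<in> carrier_mat (dim_vec v) (dim_vec v)"
  unfolding ketbra_def by simp

lemma ketbra_mult_vec:
  assumes y: "y \<in> carrier_vec n" and x: "x \<in> carrier_vec n"
  shows "ketbra y *\<^sub>v x = (x \<bullet>c y) \<cdot>\<^sub>v y"
proof (rule eq_vecI)
  fix p assume "p < dim_vec ((x \<bullet>c y) \<cdot>\<^sub>v y)"
  then show "(ketbra y *\<^sub>v x) $ p = ((x \<bullet>c y) \<cdot>\<^sub>v y) $ p"
    using x y unfolding ketbra_def
    by (simp add: scalar_prod_def atLeast0LessThan sum_distrib_left mult_ac cscalar_prod_expand[OF x y])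
qed (use x y in \<open>auto simp: ketbra_def\<close>)

lemma quad_form_ketbra:
  assumes a: "a \<in> carrier_vec n" and x: "x \<in> carrier_vec n"
  shows "quad_form a (ketbra x) = (a \<bullet>c x) * cnj (a \<bullet>c x)"
  unfolding quad_form_def ketbra_mult_vec[OF x a] cscalar_prod_smult_left[OF x a]
  using cscalar_prod_swap[OF x a] by simp

lemma phase_equiv_of_ketbra_eq:
  assumes x: "x \<in> carrier_vec n" and y: "y \<in> carrier_vec n"
    and xx: "x \<bullet>c x = 1" and eq: "ketbra x = ketbra y"
  shows "phase_equiv x y"
proof -
  have "x = ketbra x *\<^sub>v x" using ketbra_mult_vec[OF x x] xx by simp
  also have "\<dots> = (x \<bullet>c y) \<cdot>\<^sub>v y" unfolding eq using ketbra_mult_vec[OF y x] .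
  finally have xc: "x = (x \<bullet>c y) \<cdot>\<^sub>v y" .
  have "y \<bullet>c y = 1"
    using arg_cong[OF eq, of mtrace] xx x y unfolding ketbra_def mtrace_def
    by (simp add: cscalar_prod_expand[of _ n])
  moreover have "1 = ((x \<bullet>c y) * cnj (x \<bullet>c y)) * (y \<bullet>c y)"
    using xx xc cscalar_prod_smult[OF y y] by metis
  ultimately have "(x \<bullet>c y) * cnj (x \<bullet>c y) = 1" by simp
  then have "complex_of_real ((cmod (x \<bullet>c y))^2) = 1" by (simp only: complex_norm_square)
  then have "(cmod (x \<bullet>c y))^2 = 1" by (simp only: of_real_eq_1_iff)
  then have "cmod (x \<bullet>c y) = 1" using norm_ge_zero[of "x \<bullet>c y"] by (auto simp: power2_eq_1_iff)
  then show ?thesis using xc unfolding phase_equiv_def by blast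
qed

lemma mult_outer_sum_adj:
  assumes A: "A \<in> carrier_mat m m" and b: "\<And>j. j \<in> J \<Longrightarrow> b j \<in> carrier_vec m"
  shows "A * mat m m (\<lambda>(p,q). \<Sum>j\<in>J. c j * (b j $ p * cnj (b j $ q))) * adj A
       = mat m m (\<lambda>(p,q). \<Sum>j\<in>J. c j * ((A *\<^sub>v b j) $ p * cnj ((A *\<^sub>v b j) $ q)))"
    (is "?L = ?R")
proof (rule eq_matI)
  fix p q assume "p < dim_row ?R" and "q < dim_col ?R"
  then have p: "p < m" and q: "q < m" by auto
  have "?L $$ (p,q) = (\<Sum>y<m. \<Sum>x<m. \<Sum>j\<in>J. c j * (A$$(p,x) * b j $ x) * (cnj (A$$(q,y)) * cnj (b j $ y)))"
    using A p q
    by (simp add: scalar_prod_def atLeast0LessThan sum_distrib_left sum_distrib_right mult_ac)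
  also have "\<dots> = (\<Sum>j\<in>J. c j * ((\<Sum>x<m. A$$(p,x) * b j $ x) * cnj (\<Sum>y<m. A$$(q,y) * b j $ y)))"
    by (simp add: sum.swap[where B=J] sum_distrib_left sum_distrib_right cnj_sum mult_ac)
  also have "\<dots> = (\<Sum>j\<in>J. c j * ((A *\<^sub>v b j) $ p * cnj ((A *\<^sub>v b j) $ q)))"
  proof (rule sum.cong[OF refl])
    fix j assume "j \<in> J"
    then have "dim_vec (b j) = m" using b by auto
    then show "c j * ((\<Sum>x<m. A$$(p,x) * b j $ x) * cnj (\<Sum>y<m. A$$(q,y) * b j $ y))
      = c j * ((A *\<^sub>v b j) $ p * cnj ((A *\<^sub>v b j) $ q))"
      using A p q by (simp add: scalar_prod_def atLeast0LessThan)
  qed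
  finally show "?L $$ (p,q) = ?R $$ (p,q)" using p q by simp
qed (use A in auto)

lemma ketbra_conj:
  assumes A: "A \<in> carrier_mat n n" and v: "v \<in> carrier_vec n"
  shows "A * ketbra v * adj A = ketbra (A *\<^sub>v v)"
proof -
  have k: "ketbra u = mat n n (\<lambda>(p,q). \<Sum>j\<in>{()}. 1 * (u $ p * cnj (u $ q)))" if "u \<in> carrier_vec n" for u
    using that unfolding ketbra_def by (auto intro!: eq_matI)
  show ?thesis
    using mult_outer_sum_adj[OF A, where J="{()}" and b="\<lambda>_. v" and c="\<lambda>_. 1"] A v
    by (simp add: k)
qed


section \<open>Tensor powers of vectors\<close>

definition kron_vec :: "complex vec \<Rightarrow> complex vec \<Rightarrow> complex vec" where
  "kron_vec x y = vec (dim_vec x * dim_vec y) (\<lambda>i. x $ (i div dim_vec y) * y $ (i mod dim_vec y))"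

fun kron_vec_pow :: "complex vec \<Rightarrow> nat \<Rightarrow> complex vec" where
  "kron_vec_pow x 0 = vec 1 (\<lambda>_. 1)"
| "kron_vec_pow x (Suc M) = kron_vec x (kron_vec_pow x M)"

lemma dim_kron_vec[simp]: "dim_vec (kron_vec x y) = dim_vec x * dim_vec y"
  unfolding kron_vec_def by simp

lemma dim_kron_vec_pow[simp]: "dim_vec (kron_vec_pow x M) = dim_vec x ^ M"
  by (induction M) auto

lemma kron_vec_pow_carrier: "x \<in> carrier_vec d \<Longrightarrow> kron_vec_pow x M \<in> carrier_vec (d^M)"
  by (intro carrier_vecI) auto

lemma kron_carrier:
  "A \<in> carrier_mat r1 c1 \<Longrightarrow> B \<in> carrier_mat r2 c2 \<Longrightarrow> kron A B \<in> carrier_mat (r1*r2) (c1*c2)"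
  unfolding kron_def carrier_mat_def by simp

lemma kron_pow_carrier: "A \<in> carrier_mat r c \<Longrightarrow> kron_pow A M \<in> carrier_mat (r^M) (c^M)"
  by (induction M) (auto intro: kron_carrier)

lemma kron_mult_kron_vec:
  assumes A: "A \<in> carrier_mat r1 c1" and B: "B \<in> carrier_mat r2 c2"
    and x: "x \<in> carrier_vec c1" and y: "y \<in> carrier_vec c2" and c2: "0 < c2"
  shows "kron A B *\<^sub>v kron_vec x y = kron_vec (A *\<^sub>v x) (B *\<^sub>v y)"
proof (rule eq_vecI)
  show "dim_vec (kron A B *\<^sub>v kron_vec x y) = dim_vec (kron_vec (A *\<^sub>v x) (B *\<^sub>v y))"
    using A B unfolding kron_def by auto
  fix i assume "i < dim_vec (kron_vec (A *\<^sub>v x) (B *\<^sub>v y))"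
  then have i: "i < r1 * r2" using A B by auto
  have "(kron A B *\<^sub>v kron_vec x y) $ i
      = (\<Sum>l<c1*c2. A $$ (i div r2, l div c2) * B $$ (i mod r2, l mod c2) * (x $ (l div c2) * y $ (l mod c2)))"
    using A B x y i unfolding kron_def kron_vec_def
    by (auto simp: scalar_prod_def atLeast0LessThan intro!: sum.cong)
  also have "\<dots> = (\<Sum>c<c1. \<Sum>p<c2. A $$ (i div r2, c) * B $$ (i mod r2, p) * (x $ c * y $ p))"
    by (rule sum_lessThan_mult_div_mod[OF c2])
  also have "\<dots> = (\<Sum>c<c1. A $$ (i div r2, c) * x $ c) * (\<Sum>p<c2. B $$ (i mod r2, p) * y $ p)"
    by (simp add: sum_product mult_ac)
  also have "\<dots> = kron_vec (A *\<^sub>v x) (B *\<^sub>v y) $ i"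
    using A B x y i less_mult_imp_div_less[OF i] mod_less_of_less_mult[OF i] unfolding kron_vec_def
    by (auto simp: scalar_prod_def atLeast0LessThan)
  finally show "(kron A B *\<^sub>v kron_vec x y) $ i = kron_vec (A *\<^sub>v x) (B *\<^sub>v y) $ i" .
qed

lemma kron_pow_mult_kron_vec_pow:
  assumes A: "A \<in> carrier_mat d d" and x: "x \<in> carrier_vec d" and d: "0 < d"
  shows "kron_pow A M *\<^sub>v kron_vec_pow x M = kron_vec_pow (A *\<^sub>v x) M"
proof (induction M)
  case 0 then show ?case by (simp add: one_mult_mat_vec[of _ 1])
next
  case (Suc M)
  have "kron_pow A (Suc M) *\<^sub>v kron_vec_pow x (Suc M) = kron A (kron_pow A M) *\<^sub>v kron_vec x (kron_vec_pow x M)"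
    by simp
  also have "\<dots> = kron_vec (A *\<^sub>v x) (kron_pow A M *\<^sub>v kron_vec_pow x M)"
    by (rule kron_mult_kron_vec[OF A kron_pow_carrier[OF A] x kron_vec_pow_carrier[OF x]]) (use d in simp)
  finally show ?case using Suc by simp
qed

lemma cscalar_prod_kron_vec_self:
  assumes "0 < dim_vec y"
  shows "kron_vec x y \<bullet>c kron_vec x y = (x \<bullet>c x) * (y \<bullet>c y)"
proof -
  have c: "kron_vec x y \<in> carrier_vec (dim_vec x * dim_vec y)" by (rule carrier_vecI) simp
  have x: "x \<in> carrier_vec (dim_vec x)" and y: "y \<in> carrier_vec (dim_vec y)" by (auto intro: carrier_vecI)
  have "kron_vec x y \<bullet>c kron_vec x y
      = (\<Sum>i<dim_vec x * dim_vec y. (x $ (i div dim_vec y) * cnj (x $ (i div dim_vec y)))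
                                    * (y $ (i mod dim_vec y) * cnj (y $ (i mod dim_vec y))))"
    unfolding cscalar_prod_expand[OF c c] by (rule sum.cong) (auto simp: kron_vec_def ac_simps)
  also have "\<dots> = (\<Sum>c<dim_vec x. \<Sum>p<dim_vec y. (x $ c * cnj (x $ c)) * (y $ p * cnj (y $ p)))"
    by (rule sum_lessThan_mult_div_mod[OF assms])
  also have "\<dots> = (\<Sum>c<dim_vec x. x $ c * cnj (x $ c)) * (\<Sum>p<dim_vec y. y $ p * cnj (y $ p))"
    by (rule sum_product[symmetric])
  also have "\<dots> = (x \<bullet>c x) * (y \<bullet>c y)"
    unfolding cscalar_prod_expand[OF x x] cscalar_prod_expand[OF y y] ..
  finally show ?thesis .
qed

lemma kron_vec_pow_unit:
  assumes "x \<bullet>c x = 1" "0 < dim_vec x"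
  shows "kron_vec_pow x M \<bullet>c kron_vec_pow x M = 1"
proof (induction M)
  case 0 then show ?case by (simp add: scalar_prod_def)
next
  case (Suc M) then show ?case using assms by (simp add: cscalar_prod_kron_vec_self)
qed

lemma kron_vec_smult: "kron_vec (a \<cdot>\<^sub>v x) (b \<cdot>\<^sub>v y) = (a * b) \<cdot>\<^sub>v kron_vec x y"
proof (rule eq_vecI)
  fix i assume "i < dim_vec ((a * b) \<cdot>\<^sub>v kron_vec x y)"
  then have i: "i < dim_vec x * dim_vec y" by simp
  then show "kron_vec (a \<cdot>\<^sub>v x) (b \<cdot>\<^sub>v y) $ i = ((a * b) \<cdot>\<^sub>v kron_vec x y) $ i"
    using less_mult_imp_div_less[OF i] mod_less_of_less_mult[OF i] unfolding kron_vec_def by simp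
qed simp

lemma kron_vec_pow_smult: "kron_vec_pow (c \<cdot>\<^sub>v x) M = c^M \<cdot>\<^sub>v kron_vec_pow x M"
  by (induction M) (auto intro!: eq_vecI simp: kron_vec_smult)

lemma phase_equiv_kron_vec_pow:
  assumes "phase_equiv x y"
  shows "phase_equiv (kron_vec_pow x M) (kron_vec_pow y M)"
proof -
  obtain e where "cmod e = 1" "x = e \<cdot>\<^sub>v y" using assms unfolding phase_equiv_def by blast
  then show ?thesis unfolding phase_equiv_def
    by (intro exI[of _ "e^M"]) (simp add: kron_vec_pow_smult norm_power)
qed

lemma ketbra_kron_vec_pow: "0 < dim_vec x \<Longrightarrow> ketbra (kron_vec_pow x M) = kron_pow (ketbra x) M"
proof (induction M)
  case 0 then show ?case by (auto simp: ketbra_def intro!: eq_matI)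
next
  case (Suc M)
  have "ketbra (kron_vec x y) = kron (ketbra x) (ketbra y)" if "0 < dim_vec y" for y
    using that unfolding ketbra_def kron_def kron_vec_def
    by (rule_tac eq_matI) (simp_all add: less_mult_imp_div_less mod_less_of_less_mult mult_ac)
  then show ?case using Suc by simp
qed

lemma proj_unitary_rep_unitary: "proj_unitary_rep G n U \<Longrightarrow> g \<in> carrier G \<Longrightarrow> unitary_mat n (U g)"
  unfolding proj_unitary_rep_def by auto

lemma proj_unitary_rep_carrier: "proj_unitary_rep G n U \<Longrightarrow> g \<in> carrier G \<Longrightarrow> U g \<in> carrier_mat n n"
  unfolding proj_unitary_rep_def unitary_mat_def by auto

lemma proj_unitary_rep_mult_phase:
  assumes "group G" and U: "proj_unitary_rep G n U"
    and g: "g \<in> carrier G" and g': "g' \<in> carrier G" and x: "x \<in> carrier_vec n"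
  shows "phase_equiv (U g *\<^sub>v (U g' *\<^sub>v x)) (U (g \<otimes>\<^bsub>G\<^esub> g') *\<^sub>v x)"
proof -
  interpret group G by fact
  obtain \<omega> :: "_ \<Rightarrow> _ \<Rightarrow> real" where "\<forall>g\<in>carrier G. \<forall>g'\<in>carrier G.
      U g * U g' = exp (\<i> * complex_of_real (\<omega> g g')) \<cdot>\<^sub>m U (g \<otimes>\<^bsub>G\<^esub> g')"
    using U unfolding proj_unitary_rep_def by blast
  then have \<omega>: "U g * U g' = exp (\<i> * complex_of_real (\<omega> g g')) \<cdot>\<^sub>m U (g \<otimes>\<^bsub>G\<^esub> g')"
    using g g' by blast
  have "U g *\<^sub>v (U g' *\<^sub>v x) = (U g * U g') *\<^sub>v x"
    using assoc_mult_mat_vec[OF proj_unitary_rep_carrier[OF U g] proj_unitary_rep_carrier[OF U g'] x]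
    by simp
  also have "\<dots> = exp (\<i> * complex_of_real (\<omega> g g')) \<cdot>\<^sub>v (U (g \<otimes>\<^bsub>G\<^esub> g') *\<^sub>v x)"
    unfolding \<omega> using proj_unitary_rep_carrier[OF U m_closed[OF g g']] x by (rule smult_mat_mult_vec)
  finally show ?thesis
    unfolding phase_equiv_def using norm_cis[of "\<omega> g g'", unfolded cis_conv_exp] by blast
qed

lemma proj_unitary_rep_adj_mult_phase:
  assumes "group G" and U: "proj_unitary_rep G n U"
    and h: "h \<in> carrier G" and g: "g \<in> carrier G" and x: "x \<in> carrier_vec n"
  shows "phase_equiv (adj (U h) *\<^sub>v (U g *\<^sub>v x)) (U (inv\<^bsub>G\<^esub> h \<otimes>\<^bsub>G\<^esub> g) *\<^sub>v x)"
proof -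
  interpret group G by fact
  define k where "k = inv\<^bsub>G\<^esub> h \<otimes>\<^bsub>G\<^esub> g"
  have k: "k \<in> carrier G" unfolding k_def using h g by simp
  have "h \<otimes>\<^bsub>G\<^esub> k = g" unfolding k_def using h g by (simp add: m_assoc[symmetric])
  then have "phase_equiv (U g *\<^sub>v x) (U h *\<^sub>v (U k *\<^sub>v x))"
    using phase_equiv_sym[OF proj_unitary_rep_mult_phase[OF \<open>group G\<close> U h k x]] by simp
  then have "phase_equiv (adj (U h) *\<^sub>v (U g *\<^sub>v x)) (adj (U h) *\<^sub>v (U h *\<^sub>v (U k *\<^sub>v x)))"
    using proj_unitary_rep_carrier[OF U h] proj_unitary_rep_carrier[OF U k] x
    by (intro phase_equiv_smult_mat_vec[of _ _ _ n]) auto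
  then show ?thesis
    unfolding k_def[symmetric] using unitary_adj_mult_vec[OF proj_unitary_rep_unitary[OF U h]]
      proj_unitary_rep_carrier[OF U k] x by simp
qed

section \<open>Measure-and-prepare channels\<close>

definition measure_prepare ::
    "nat \<Rightarrow> 'j set \<Rightarrow> ('j \<Rightarrow> complex vec) \<Rightarrow> ('j \<Rightarrow> complex vec) \<Rightarrow> complex mat \<Rightarrow> complex mat" where
  "measure_prepare m J a b X = mat m m (\<lambda>(p,q). \<Sum>j\<in>J. quad_form (a j) X * (b j $ p * cnj (b j $ q)))"

lemma measure_prepare_carrier[simp]: "measure_prepare m J a b X \<in> carrier_mat m m"
  unfolding measure_prepare_def by simp

lemma linear_map_measure_prepare:
  assumes a: "\<And>j. j \<in> J \<Longrightarrow> a j \<in> carrier_vec n"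
  shows "linear_map n m (measure_prepare m J a b)"
  unfolding linear_map_def
proof (intro conjI ballI allI)
  fix X Y :: "complex mat" assume X: "X \<in> carrier_mat n n" and Y: "Y \<in> carrier_mat n n"
  show "measure_prepare m J a b (X + Y) = measure_prepare m J a b X + measure_prepare m J a b Y"
    by (rule eq_matI) (auto simp: measure_prepare_def quad_form_add[OF X Y a] sum.distrib distrib_right)
next
  fix c and X :: "complex mat" assume X: "X \<in> carrier_mat n n"
  show "measure_prepare m J a b (c \<cdot>\<^sub>m X) = c \<cdot>\<^sub>m measure_prepare m J a b X"
    by (rule eq_matI) (auto simp: measure_prepare_def quad_form_smult_mat[OF X a] sum_distrib_left mult_ac)
qed simp

lemma mtrace_measure_prepare:
  assumes b: "\<And>j. j \<in> J \<Longrightarrow> b j \<in> carrier_vec m \<and> b j \<bullet>c b j = 1"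
  shows "mtrace (measure_prepare m J a b X) = (\<Sum>j\<in>J. quad_form (a j) X)"
proof -
  have "mtrace (measure_prepare m J a b X) = (\<Sum>j\<in>J. quad_form (a j) X * (\<Sum>p<m. b j $ p * cnj (b j $ p)))"
    unfolding mtrace_def measure_prepare_def by (simp add: sum.swap[where B=J] sum_distrib_left)
  also have "\<dots> = (\<Sum>j\<in>J. quad_form (a j) X)"
    using b by (intro sum.cong refl) (simp add: cscalar_prod_expand[of _ m, symmetric])
  finally show ?thesis .
qed

lemma quad_form_block_vec:
  assumes X: "X \<in> carrier_mat (k*n) (k*n)" and a: "a \<in> carrier_vec n"
  shows "quad_form (vec (k*n) (\<lambda>i. a$(i mod n) * \<beta> (i div n))) X
       = (\<Sum>c<k. \<Sum>c'<k. quad_form a (block n X c c') * \<beta> c' * cnj (\<beta> c))"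
proof -
  have u: "vec (k*n) (\<lambda>i. a$(i mod n) * \<beta> (i div n)) \<in> carrier_vec (k*n)" by simp
  have blk: "block n X c c' \<in> carrier_mat n n" for c c' unfolding block_def by simp
  have "quad_form (vec (k*n) (\<lambda>i. a$(i mod n) * \<beta> (i div n))) X
      = (\<Sum>c<k. \<Sum>s<n. \<Sum>c'<k. \<Sum>s'<n. X$$(c*n+s,c'*n+s') * (a$s' * \<beta> c') * cnj (a$s * \<beta> c))"
    unfolding quad_form_expand[OF X u] sum_lessThan_mult by simp
  also have "\<dots> = (\<Sum>c<k. \<Sum>c'<k. \<Sum>s<n. \<Sum>s'<n. X$$(c*n+s,c'*n+s') * (a$s' * \<beta> c') * cnj (a$s * \<beta> c))"
    by (rule sum.cong, simp, rule sum.swap)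
  also have "\<dots> = (\<Sum>c<k. \<Sum>c'<k. quad_form a (block n X c c') * \<beta> c' * cnj (\<beta> c))"
    by (intro sum.cong refl, subst quad_form_expand[OF blk a]) (simp add: block_def sum_distrib_left mult_ac)
  finally show ?thesis .
qed

(* The left-hand side is <v| (id_k (x) (X |-> <a|X|a> |b><b|))(X) |v> written out in blocks of
   size m; being a quadratic form of X, it is nonnegative when X is positive semidefinite. *)
lemma quad_form_id_tensor_rank_one:
  fixes b v :: "complex vec"
  assumes X: "X \<in> carrier_mat (k*n) (k*n)" and a: "a \<in> carrier_vec n" and m: "0 < m"
  defines "\<beta> \<equiv> \<lambda>c. \<Sum>q<m. cnj (b$q) * v$(c*m+q)"
  shows "(\<Sum>i<k*m. \<Sum>l<k*m. quad_form a (block n X (i div m) (l div m))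
            * (b$(i mod m) * cnj (b$(l mod m))) * v$l * cnj(v$i))
     = quad_form (vec (k*n) (\<lambda>i. a$(i mod n) * \<beta> (i div n))) X"
proof -
  have "(\<Sum>i<k*m. \<Sum>l<k*m. quad_form a (block n X (i div m) (l div m)) * (b$(i mod m) * cnj (b$(l mod m))) * v$l * cnj(v$i))
     = (\<Sum>c<k. \<Sum>p<m. \<Sum>c'<k. \<Sum>q<m. quad_form a (block n X c c') * (b$p * cnj (b$q)) * v$(c'*m+q) * cnj(v$(c*m+p)))"
    unfolding sum_lessThan_mult by simp
  also have "\<dots> = (\<Sum>c<k. \<Sum>c'<k. \<Sum>p<m. \<Sum>q<m. quad_form a (block n X c c') * (b$p * cnj (b$q)) * v$(c'*m+q) * cnj(v$(c*m+p)))"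
    by (rule sum.cong, simp, rule sum.swap)
  also have "\<dots> = (\<Sum>c<k. \<Sum>c'<k. quad_form a (block n X c c') * \<beta> c' * cnj (\<beta> c))"
    unfolding \<beta>_def
    by (intro sum.cong refl, subst sum.swap) (simp add: cnj_sum sum_distrib_left sum_distrib_right mult_ac)
  also have "\<dots> = quad_form (vec (k*n) (\<lambda>i. a$(i mod n) * \<beta> (i div n))) X"
    by (rule quad_form_block_vec[OF X a, symmetric])
  finally show ?thesis .
qed

lemma completely_positive_measure_prepare:
  assumes ab: "\<And>j. j \<in> J \<Longrightarrow> a j \<in> carrier_vec n \<and> b j \<in> carrier_vec m" and m: "0 < m"
  shows "completely_positive n m (measure_prepare m J a b)"
  unfolding completely_positive_def
proof (intro allI impI)
  fix k :: nat and X assume X: "psd (k * n) X"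
  have Xc: "X \<in> carrier_mat (k*n) (k*n)" using X unfolding psd_def by auto
  define Z where "Z = id_tensor k n m (measure_prepare m J a b) X"
  have Zc: "Z \<in> carrier_mat (k*m) (k*m)" unfolding Z_def id_tensor_def by simp
  define u where "u j v = vec (k*n) (\<lambda>i. a j $(i mod n) * (\<Sum>q<m. cnj (b j $q) * v$((i div n)*m+q)))"
    for j v
  have Z_sum: "(Z *\<^sub>v v) \<bullet>c v = (\<Sum>j\<in>J. quad_form (u j v) X)" if v: "v \<in> carrier_vec (k*m)" for v
  proof -
    have "(Z *\<^sub>v v) \<bullet>c v = quad_form v Z" unfolding quad_form_def ..
    also have "\<dots> = (\<Sum>i<k*m. \<Sum>l<k*m. \<Sum>j\<in>J. quad_form (a j) (block n X (i div m) (l div m))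
                               * (b j $ (i mod m) * cnj (b j $ (l mod m))) * v$l * cnj (v$i))"
      unfolding quad_form_expand[OF Zc v] using m by (simp add: Z_def id_tensor_def measure_prepare_def sum_distrib_right)
    also have "\<dots> = (\<Sum>j\<in>J. \<Sum>i<k*m. \<Sum>l<k*m. quad_form (a j) (block n X (i div m) (l div m))
                               * (b j $ (i mod m) * cnj (b j $ (l mod m))) * v$l * cnj (v$i))"
      by (simp add: sum.swap[where B=J])
    also have "\<dots> = (\<Sum>j\<in>J. quad_form (u j v) X)"
      unfolding u_def using ab by (intro sum.cong refl quad_form_id_tensor_rank_one[OF Xc _ m]) auto
    finally show ?thesis .
  qed
  have "Im (quad_form (u j v) X) = 0 \<and> Re (quad_form (u j v) X) \<ge> 0" for j v
    using X unfolding psd_def quad_form_def u_def by auto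
  then show "psd (k * m) (id_tensor k n m (measure_prepare m J a b) X)"
    unfolding psd_def Z_def[symmetric] using Zc by (auto simp: Z_sum Im_sum Re_sum intro: sum_nonneg)
qed

lemma sum_left_mult_reindex:
  assumes "group G" and h: "h \<in> carrier G"
  shows "(\<Sum>(g,t)\<in>carrier G \<times> T. f (inv\<^bsub>G\<^esub> h \<otimes>\<^bsub>G\<^esub> g) g t) = (\<Sum>(g,t)\<in>carrier G \<times> T. f g (h \<otimes>\<^bsub>G\<^esub> g) t)"
proof -
  interpret group G by fact
  have "bij_betw (\<lambda>(g,t). (h \<otimes>\<^bsub>G\<^esub> g, t)) (carrier G \<times> T) (carrier G \<times> T)"
    by (rule bij_betwI[where g="\<lambda>(g,t). (inv\<^bsub>G\<^esub> h \<otimes>\<^bsub>G\<^esub> g, t)"])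
       (use h in \<open>auto simp: m_assoc[symmetric]\<close>)
  from sum.reindex_bij_betw[OF this, symmetric, of "\<lambda>(g,t). f (inv\<^bsub>G\<^esub> h \<otimes>\<^bsub>G\<^esub> g) g t"]
  show ?thesis using h by (auto simp: m_assoc[symmetric] intro!: sum.cong)
qed

lemma measure_prepare_covariant:
  assumes "group G" and h: "h \<in> carrier G"
   and A: "A \<in> carrier_mat n n" and B: "B \<in> carrier_mat m m"
   and a: "\<And>g t. g \<in> carrier G \<Longrightarrow> t \<in> T \<Longrightarrow> a g t \<in> carrier_vec n"
   and b: "\<And>g. g \<in> carrier G \<Longrightarrow> b g \<in> carrier_vec m"
   and X: "X \<in> carrier_mat n n"
   and a_phase: "\<And>g t. g \<in> carrier G \<Longrightarrow> t \<in> T \<Longrightarrow>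
                   phase_equiv (adj A *\<^sub>v a g t) (a (inv\<^bsub>G\<^esub> h \<otimes>\<^bsub>G\<^esub> g) t)"
   and b_phase: "\<And>g. g \<in> carrier G \<Longrightarrow> phase_equiv (B *\<^sub>v b g) (b (h \<otimes>\<^bsub>G\<^esub> g))"
  shows "B * measure_prepare m (carrier G \<times> T) (\<lambda>(g,t). a g t) (\<lambda>(g,t). b g) X * adj B
       = measure_prepare m (carrier G \<times> T) (\<lambda>(g,t). a g t) (\<lambda>(g,t). b g) (A * X * adj A)"
proof -
  interpret group G by fact
  let ?J = "carrier G \<times> T"
  define F where "F g1 g2 t p q = quad_form (a g1 t) X * (b g2 $ p * cnj (b g2 $ q))" for g1 g2 t p q
  have "B * measure_prepare m ?J (\<lambda>(g,t). a g t) (\<lambda>(g,t). b g) X * adj B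
      = mat m m (\<lambda>(p,q). \<Sum>(g,t)\<in>?J. quad_form (a g t) X * ((B *\<^sub>v b g) $ p * cnj ((B *\<^sub>v b g) $ q)))"
    unfolding measure_prepare_def
    by (subst mult_outer_sum_adj[OF B]) (use b in \<open>auto simp: case_prod_beta\<close>)
  also have "\<dots> = mat m m (\<lambda>(p,q). \<Sum>(g,t)\<in>?J. F g (h \<otimes>\<^bsub>G\<^esub> g) t p q)"
  proof -
    have "dim_vec (b (h \<otimes>\<^bsub>G\<^esub> g)) = m" if "g \<in> carrier G" for g
      using b h that by auto
    then show ?thesis unfolding F_def
      by (intro eq_matI) (auto intro!: sum.cong phase_equiv_outer_entry[OF b_phase])
  qed
  also have "\<dots> = mat m m (\<lambda>(p,q). \<Sum>(g,t)\<in>?J. F (inv\<^bsub>G\<^esub> h \<otimes>\<^bsub>G\<^esub> g) g t p q)"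
    using sum_left_mult_reindex[OF \<open>group G\<close> h, of "\<lambda>g1 g2 t. F g1 g2 t _ _"] by (intro eq_matI) simp_all
  also have "\<dots> = measure_prepare m ?J (\<lambda>(g,t). a g t) (\<lambda>(g,t). b g) (A * X * adj A)"
  proof -
    have "quad_form (a g t) (A * X * adj A) = quad_form (a (inv\<^bsub>G\<^esub> h \<otimes>\<^bsub>G\<^esub> g) t) X"
      if "g \<in> carrier G" "t \<in> T" for g t
      using quad_form_conj[OF A X a[OF that]] quad_form_phase_equiv[OF a_phase[OF that] X] a h that
      by simp
    then show ?thesis unfolding measure_prepare_def F_def by (auto intro!: eq_matI sum.cong)
  qed
  finally show ?thesis .
qed

section \<open>The conversion channel\<close>

locale uniform_state_conversion =
  fixes G :: "('g, 'b) monoid_scheme" and H :: "'g set"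
    and d d' :: nat and U U' :: "'g \<Rightarrow> complex mat" and \<xi> \<phi> :: "complex vec"
  assumes G_group: "group G" and G_finite: "finite (carrier G)" and H_subgroup: "subgroup H G"
    and U_rep: "proj_unitary_rep G d U" and \<xi>_pure: "pure_state d \<xi>"
    and char_H: "\<forall>g\<in>H. char_fun U \<xi> g = 1"
    and char_not_H: "\<forall>g\<in>carrier G - H. char_fun U \<xi> g = 0"
    and U'_rep: "proj_unitary_rep G d' U'" and \<phi>_pure: "pure_state d' \<phi>"
    and H_Sym: "H \<subseteq> Sym G U' \<phi>"
begin

lemma \<xi>_carrier: "\<xi> \<in> carrier_vec d" and \<xi>_unit: "\<xi> \<bullet>c \<xi> = 1"
  using \<xi>_pure unfolding pure_state_def by auto

lemma \<phi>_carrier: "\<phi> \<in> carrier_vec d'" and \<phi>_unit: "\<phi> \<bullet>c \<phi> = 1"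
  using \<phi>_pure unfolding pure_state_def by auto

lemma d'_pos: "0 < d'" using dim_pos_of_unit_vec[OF \<phi>_carrier \<phi>_unit] .

lemma H_subset: "H \<subseteq> carrier G" using H_subgroup by (rule subgroup.subset)
lemma card_H_pos: "0 < card H"
  using finite_subset[OF H_subset G_finite] subgroup.one_closed[OF H_subgroup] card_gt_0_iff by blast
lemma card_G_pos: "0 < card (carrier G)"
  using G_finite H_subset subgroup.one_closed[OF H_subgroup] card_gt_0_iff by blast

lemma sum_if_H: "(\<Sum>g\<in>carrier G. if g \<in> H then c else 0) = of_nat (card H) * (c::complex)"
proof -
  have "{g \<in> carrier G. g \<in> H} = H" using H_subset by auto
  then show ?thesis using sum_if_const[OF G_finite, of "\<lambda>g. g \<in> H" c] by simp
qed

lemma U_carrier: "g \<in> carrier G \<Longrightarrow> U g \<in> carrier_mat d d"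
  by (rule proj_unitary_rep_carrier[OF U_rep])
lemma U'_carrier: "g \<in> carrier G \<Longrightarrow> U' g \<in> carrier_mat d' d'"
  by (rule proj_unitary_rep_carrier[OF U'_rep])

definition \<psi> :: "'g \<Rightarrow> complex vec" where "\<psi> g = U g *\<^sub>v \<xi>"

lemma \<psi>_carrier: "g \<in> carrier G \<Longrightarrow> \<psi> g \<in> carrier_vec d"
  unfolding \<psi>_def by (rule mult_mat_vec_carrier[OF U_carrier \<xi>_carrier])

lemma \<psi>_unit: "g \<in> carrier G \<Longrightarrow> \<psi> g \<bullet>c \<psi> g = 1"
  unfolding \<psi>_def using unitary_cscalar_prod[OF proj_unitary_rep_unitary[OF U_rep] \<xi>_carrier \<xi>_carrier] \<xi>_unit
  by simp

lemma U_fixes_\<xi>: "h \<in> H \<Longrightarrow> U h *\<^sub>v \<xi> = \<xi>"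
  using \<psi>_carrier \<psi>_unit \<xi>_carrier \<xi>_unit char_H H_subset unfolding \<psi>_def char_fun_def
  by (intro unit_vec_eq_of_cscalar_prod_eq_1[of _ d]) auto

lemma \<psi>_mult_phase:
  assumes "g \<in> carrier G" "k \<in> carrier G"
  shows "phase_equiv (\<psi> (g \<otimes>\<^bsub>G\<^esub> k)) (U g *\<^sub>v (U k *\<^sub>v \<xi>))"
  unfolding \<psi>_def by (rule phase_equiv_sym, rule proj_unitary_rep_mult_phase[OF G_group U_rep assms \<xi>_carrier])

lemma \<psi>_phase_equiv_coset:
  assumes g: "g \<in> carrier G" and g': "g' \<in> carrier G" and "inv\<^bsub>G\<^esub> g \<otimes>\<^bsub>G\<^esub> g' \<in> H"
  shows "phase_equiv (\<psi> g') (\<psi> g)"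
proof -
  interpret group G by (rule G_group)
  have "g \<otimes>\<^bsub>G\<^esub> (inv\<^bsub>G\<^esub> g \<otimes>\<^bsub>G\<^esub> g') = g'" using g g' by (simp add: m_assoc[symmetric])
  then show ?thesis
    using \<psi>_mult_phase[OF g, of "inv\<^bsub>G\<^esub> g \<otimes>\<^bsub>G\<^esub> g'"] g g' U_fixes_\<xi>[OF assms(3)] unfolding \<psi>_def
    by simp
qed

lemma \<psi>_orthogonal:
  assumes g: "g \<in> carrier G" and g': "g' \<in> carrier G" and "inv\<^bsub>G\<^esub> g \<otimes>\<^bsub>G\<^esub> g' \<notin> H"
  shows "\<psi> g' \<bullet>c \<psi> g = 0"
proof -
  interpret group G by (rule G_group)
  define k where "k = inv\<^bsub>G\<^esub> g \<otimes>\<^bsub>G\<^esub> g'"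
  have k: "k \<in> carrier G" unfolding k_def using g g' by simp
  have "g \<otimes>\<^bsub>G\<^esub> k = g'" unfolding k_def using g g' by (simp add: m_assoc[symmetric])
  then obtain e where e: "\<psi> g' = e \<cdot>\<^sub>v (U g *\<^sub>v (U k *\<^sub>v \<xi>))"
    using \<psi>_mult_phase[OF g k] unfolding phase_equiv_def by auto
  have Uk\<xi>: "U k *\<^sub>v \<xi> \<in> carrier_vec d" using U_carrier[OF k] \<xi>_carrier by simp
  have "(U k *\<^sub>v \<xi>) \<bullet>c \<xi> = 0"
    using char_not_H k assms(3) unfolding k_def[symmetric] char_fun_def by simp
  then show ?thesis
    unfolding e unfolding \<psi>_def
    using cscalar_prod_smult_left[of _ d] U_carrier[OF g] Uk\<xi> \<xi>_carrier
      unitary_cscalar_prod[OF proj_unitary_rep_unitary[OF U_rep g] Uk\<xi> \<xi>_carrier]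
    by simp
qed

lemma \<psi>_overlap:
  assumes g: "g \<in> carrier G" and g': "g' \<in> carrier G" and s: "s < d" and s': "s' < d"
  shows "\<psi> g $ s * (\<psi> g' \<bullet>c \<psi> g) * cnj (\<psi> g' $ s')
       = (if inv\<^bsub>G\<^esub> g \<otimes>\<^bsub>G\<^esub> g' \<in> H then \<psi> g $ s * cnj (\<psi> g $ s') else 0)"
proof (cases "inv\<^bsub>G\<^esub> g \<otimes>\<^bsub>G\<^esub> g' \<in> H")
  case True
  then obtain e where e: "cmod e = 1" "\<psi> g' = e \<cdot>\<^sub>v \<psi> g"
    using \<psi>_phase_equiv_coset[OF g g'] unfolding phase_equiv_def by blast
  have ee: "e * cnj e = 1" using e(1) complex_norm_square[of e] by simp
  have overlap: "\<psi> g' \<bullet>c \<psi> g = e"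
    unfolding e(2) using cscalar_prod_smult_left[OF \<psi>_carrier[OF g] \<psi>_carrier[OF g]] \<psi>_unit[OF g] by simp
  have entry: "cnj (\<psi> g' $ s') = cnj e * cnj (\<psi> g $ s')"
    using e(2) s' \<psi>_carrier[OF g] by simp
  have "\<psi> g $ s * (\<psi> g' \<bullet>c \<psi> g) * cnj (\<psi> g' $ s') = (e * cnj e) * (\<psi> g $ s * cnj (\<psi> g $ s'))"
    unfolding overlap entry by (simp add: mult_ac)
  then show ?thesis using True by (simp only: ee mult_1 if_True)
qed (simp add: \<psi>_orthogonal[OF g g'])

definition kH :: complex where "kH = complex_of_real (1 / real (card H))"
definition kG :: complex where "kG = complex_of_real (1 / real (card (carrier G)))"

lemma kH_card: "kH * of_nat (card H) = 1"
  unfolding kH_def using card_H_pos by simp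

lemma kG_card: "of_nat (card (carrier G)) * kG = 1"
  unfolding kG_def using card_G_pos by simp

definition P :: "complex mat" where
  "P = mat d d (\<lambda>(s,s'). \<Sum>g\<in>carrier G. kH * (\<psi> g $ s * cnj (\<psi> g $ s')))"

lemma P_carrier: "P \<in> carrier_mat d d" unfolding P_def by simp

lemma card_left_coset:
  assumes g: "g \<in> carrier G"
  shows "card {g'\<in>carrier G. inv\<^bsub>G\<^esub> g \<otimes>\<^bsub>G\<^esub> g' \<in> H} = card H"
proof -
  interpret group G by (rule G_group)
  have "bij_betw (\<lambda>h. g \<otimes>\<^bsub>G\<^esub> h) H {g'\<in>carrier G. inv\<^bsub>G\<^esub> g \<otimes>\<^bsub>G\<^esub> g' \<in> H}"
    by (rule bij_betwI[where g="\<lambda>g'. inv\<^bsub>G\<^esub> g \<otimes>\<^bsub>G\<^esub> g'"])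
       (use g H_subset in \<open>auto simp: m_assoc[symmetric]\<close>)
  then show ?thesis by (simp add: bij_betw_same_card)
qed

lemma sum_\<psi>_overlap:
  assumes g: "g \<in> carrier G" and s: "s < d" and s': "s' < d"
  shows "(\<Sum>g'\<in>carrier G. \<psi> g $ s * (\<psi> g' \<bullet>c \<psi> g) * cnj (\<psi> g' $ s'))
       = of_nat (card H) * (\<psi> g $ s * cnj (\<psi> g $ s'))"
proof -
  have "(\<Sum>g'\<in>carrier G. \<psi> g $ s * (\<psi> g' \<bullet>c \<psi> g) * cnj (\<psi> g' $ s'))
      = (\<Sum>g'\<in>carrier G. if inv\<^bsub>G\<^esub> g \<otimes>\<^bsub>G\<^esub> g' \<in> H then \<psi> g $ s * cnj (\<psi> g $ s') else 0)"
    by (intro sum.cong refl) (simp add: \<psi>_overlap[OF g _ s s'])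
  then show ?thesis using sum_if_const[OF G_finite, where 'a=complex] card_left_coset[OF g] by simp
qed

lemma P_idem: "P * P = P"
proof (rule eq_matI)
  fix s s' assume "s < dim_row P" "s' < dim_col P"
  then have s: "s < d" and s': "s' < d" unfolding P_def by auto
  have "(P * P) $$ (s,s') = (\<Sum>r<d. (\<Sum>g\<in>carrier G. kH * (\<psi> g $ s * cnj (\<psi> g $ r)))
                                   * (\<Sum>g'\<in>carrier G. kH * (\<psi> g' $ r * cnj (\<psi> g' $ s'))))"
    using s s' unfolding P_def by (simp add: scalar_prod_def atLeast0LessThan)
  also have "\<dots> = (\<Sum>r<d. \<Sum>g\<in>carrier G. \<Sum>g'\<in>carrier G.
                     kH * kH * (\<psi> g $ s * (\<psi> g' $ r * cnj (\<psi> g $ r)) * cnj (\<psi> g' $ s')))"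
    by (rule sum.cong, simp) (subst sum_product, simp add: mult_ac)
  also have "\<dots> = (\<Sum>g\<in>carrier G. \<Sum>g'\<in>carrier G. \<Sum>r<d.
                     kH * kH * (\<psi> g $ s * (\<psi> g' $ r * cnj (\<psi> g $ r)) * cnj (\<psi> g' $ s')))"
    by (subst sum.swap, rule sum.cong, simp, rule sum.swap)
  also have "\<dots> = (\<Sum>g\<in>carrier G. kH * kH * (\<Sum>g'\<in>carrier G. \<psi> g $ s * (\<psi> g' \<bullet>c \<psi> g) * cnj (\<psi> g' $ s')))"
    by (intro sum.cong refl)
       (simp add: cscalar_prod_expand[OF \<psi>_carrier \<psi>_carrier] sum_distrib_left sum_distrib_right mult_ac)
  also have "\<dots> = (\<Sum>g\<in>carrier G. (kH * of_nat (card H)) * (kH * (\<psi> g $ s * cnj (\<psi> g $ s'))))"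
    by (intro sum.cong refl, subst sum_\<psi>_overlap[OF _ s s']) (simp_all add: mult_ac)
  also have "\<dots> = P $$ (s,s')" unfolding P_def kH_card using s s' by simp
  finally show "(P * P) $$ (s,s') = P $$ (s,s')" .
qed (auto simp: P_def)

lemma P_adj: "adj P = P"
  by (rule eq_matI) (auto simp: P_def kH_def cnj_sum mult_ac)

lemma P_invariant:
  assumes g: "g \<in> carrier G"
  shows "U g * P * adj (U g) = P"
proof -
  interpret group G by (rule G_group)
  have "U g * P * adj (U g) = mat d d (\<lambda>(s,s'). \<Sum>h\<in>carrier G. kH * ((U g *\<^sub>v \<psi> h) $ s * cnj ((U g *\<^sub>v \<psi> h) $ s')))"
    unfolding P_def by (rule mult_outer_sum_adj[OF U_carrier[OF g]]) (rule \<psi>_carrier)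
  also have "\<dots> = mat d d (\<lambda>(s,s'). \<Sum>h\<in>carrier G. kH * (\<psi> (g \<otimes>\<^bsub>G\<^esub> h) $ s * cnj (\<psi> (g \<otimes>\<^bsub>G\<^esub> h) $ s')))"
  proof -
    have "phase_equiv (U g *\<^sub>v \<psi> h) (\<psi> (g \<otimes>\<^bsub>G\<^esub> h))" if "h \<in> carrier G" for h
      using phase_equiv_sym[OF \<psi>_mult_phase[OF g that]] by (simp add: \<psi>_def)
    moreover have "dim_vec (\<psi> (g \<otimes>\<^bsub>G\<^esub> h)) = d" if "h \<in> carrier G" for h
      using \<psi>_carrier g that by auto
    ultimately show ?thesis by (intro eq_matI) (auto intro!: sum.cong phase_equiv_outer_entry)
  qed
  also have "\<dots> = P"
  proof -
    have "(\<Sum>h\<in>carrier G. kH * (\<psi> (g \<otimes>\<^bsub>G\<^esub> h) $ s * cnj (\<psi> (g \<otimes>\<^bsub>G\<^esub> h) $ s')))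
        = (\<Sum>h\<in>carrier G. kH * (\<psi> h $ s * cnj (\<psi> h $ s')))" for s s'
      using sum.reindex[OF inj_on_cmult[OF g], of "\<lambda>h. kH * (\<psi> h $ s * cnj (\<psi> h $ s'))"]
        surj_const_mult[OF g] by (simp add: comp_def)
    then show ?thesis unfolding P_def by simp
  qed
  finally show ?thesis .
qed

definition Q :: "complex mat" where "Q = 1\<^sub>m d - P"

lemma Q_carrier: "Q \<in> carrier_mat d d" unfolding Q_def by (rule minus_carrier_mat[OF P_carrier])

lemma Q_adj: "adj Q = Q"
proof (rule eq_matI)
  fix i j assume "i < dim_row Q" "j < dim_col Q"
  then have i: "i < d" and j: "j < d" using Q_carrier by auto
  have "P $$ (i,j) = cnj (P $$ (j,i))" using P_adj i j P_carrier by (metis adj_index carrier_matD(1,2))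
  then show "adj Q $$ (i,j) = Q $$ (i,j)" using i j P_carrier unfolding Q_def by auto
qed (use Q_carrier in auto)

lemma Q_idem: "Q * Q = Q"
proof -
  have one: "1\<^sub>m d \<in> carrier_mat d d" by simp
  have "Q * Q = 1\<^sub>m d * Q - P * Q"
    unfolding Q_def by (rule minus_mult_distrib_mat[OF one P_carrier]) (rule Q_carrier[unfolded Q_def])
  also have "P * Q = P * 1\<^sub>m d - P * P"
    unfolding Q_def by (rule mult_minus_distrib_mat[OF P_carrier one P_carrier])
  also have "\<dots> = P - P" using P_carrier P_idem by simp
  finally have e: "Q * Q = 1\<^sub>m d * Q - (P - P)" .
  show ?thesis
    by (rule eq_matI) (use Q_carrier P_carrier in \<open>auto simp: e\<close>)
qed

lemma Q_invariant:
  assumes g: "g \<in> carrier G"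
  shows "U g * Q * adj (U g) = Q"
proof -
  have Ug: "U g \<in> carrier_mat d d" by (rule U_carrier[OF g])
  have "U g * Q = U g - U g * P"
    unfolding Q_def using mult_minus_distrib_mat[OF Ug one_carrier_mat P_carrier] Ug by simp
  then have "U g * Q * adj (U g) = (U g - U g * P) * adj (U g)" by simp
  also have "\<dots> = U g * adj (U g) - U g * P * adj (U g)"
    by (rule minus_mult_distrib_mat) (use Ug P_carrier in auto)
  also have "\<dots> = Q"
    unfolding P_invariant[OF g] unitary_mult_adj[OF proj_unitary_rep_unitary[OF U_rep g]] Q_def ..
  finally show ?thesis .
qed

lemma U_Q_mult_adj: "g \<in> carrier G \<Longrightarrow> (U g * Q) * adj (U g * Q) = Q"
proof -
  assume g: "g \<in> carrier G"
  have Ug: "U g \<in> carrier_mat d d" by (rule U_carrier[OF g])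
  have aUg: "adj (U g) \<in> carrier_mat d d" using Ug by simp
  have "(U g * Q) * adj (U g * Q) = U g * (Q * Q) * adj (U g)"
    using Ug aUg Q_carrier by (simp add: adj_mult[OF Ug Q_carrier] Q_adj assoc_mult_mat[of _ d d _ d _ d])
  then show ?thesis unfolding Q_idem by (simp add: Q_invariant[OF g])
qed

(* The vectors U g *v meas_vec t, t <= d, decompose the POVM element of outcome g,
   |H|^-1 |psi g><psi g| + |G|^-1 Q, into rank-one terms; those with t < d come from Q = Q Q^dagger. *)
definition meas_vec :: "nat \<Rightarrow> complex vec" where
  "meas_vec t = (if t = d then complex_of_real (sqrt (1 / real (card H))) \<cdot>\<^sub>v \<xi>
                 else complex_of_real (sqrt (1 / real (card (carrier G)))) \<cdot>\<^sub>v col Q t)"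

lemma meas_vec_carrier: "meas_vec t \<in> carrier_vec d"
  unfolding meas_vec_def using \<xi>_carrier Q_carrier by (auto intro!: carrier_vecI)

lemma U_meas_vec_carrier: "g \<in> carrier G \<Longrightarrow> U g *\<^sub>v meas_vec t \<in> carrier_vec d"
  by (rule mult_mat_vec_carrier[OF U_carrier meas_vec_carrier])

lemma sum_quad_form_meas_vec:
  assumes g: "g \<in> carrier G" and X: "X \<in> carrier_mat d d"
  shows "(\<Sum>t<Suc d. quad_form (U g *\<^sub>v meas_vec t) X) = kH * quad_form (\<psi> g) X + kG * mtrace (X * Q)"
proof -
  have Ug: "U g \<in> carrier_mat d d" by (rule U_carrier[OF g])
  have "U g *\<^sub>v meas_vec d = complex_of_real (sqrt (1 / real (card H))) \<cdot>\<^sub>v \<psi> g"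
    unfolding meas_vec_def \<psi>_def using mult_mat_vec[OF Ug \<xi>_carrier] by simp
  then have "quad_form (U g *\<^sub>v meas_vec d) X = kH * quad_form (\<psi> g) X"
    unfolding kH_def by (simp add: quad_form_smult_sqrt[OF X \<psi>_carrier[OF g]])
  moreover have "(\<Sum>t<d. quad_form (U g *\<^sub>v meas_vec t) X) = kG * mtrace (X * Q)"
  proof -
    have "quad_form (U g *\<^sub>v meas_vec t) X = kG * quad_form (col (U g * Q) t) X" if t: "t < d" for t
    proof -
      have cQ: "col Q t \<in> carrier_vec d" using Q_carrier by (auto intro!: carrier_vecI)
      have "U g *\<^sub>v meas_vec t = complex_of_real (sqrt (1 / real (card (carrier G)))) \<cdot>\<^sub>v col (U g * Q) t"
        unfolding meas_vec_def using t mult_mat_vec[OF Ug cQ] col_mult2[OF Ug Q_carrier t] by simp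
      moreover have "col (U g * Q) t \<in> carrier_vec d" using Ug Q_carrier by (auto intro!: carrier_vecI)
      ultimately show ?thesis unfolding kG_def by (simp add: quad_form_smult_sqrt[OF X])
    qed
    then have "(\<Sum>t<d. quad_form (U g *\<^sub>v meas_vec t) X) = kG * (\<Sum>t<d. quad_form (col (U g * Q) t) X)"
      by (simp add: sum_distrib_left)
    also have "\<dots> = kG * mtrace (X * Q)"
      unfolding sum_quad_form_col[OF mult_carrier_mat[OF Ug Q_carrier] X] U_Q_mult_adj[OF g] ..
    finally show ?thesis .
  qed
  ultimately show ?thesis by simp
qed

lemma sum_quad_form_\<psi>:
  assumes X: "X \<in> carrier_mat d d"
  shows "(\<Sum>g\<in>carrier G. kH * quad_form (\<psi> g) X) = mtrace (X * P)"
  unfolding P_def by (rule mtrace_mult_outer_sum[OF X \<psi>_carrier, symmetric])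

lemma sum_quad_form_meas_vecs:
  assumes X: "X \<in> carrier_mat d d"
  shows "(\<Sum>(g,t)\<in>carrier G \<times> {..<Suc d}. quad_form (U g *\<^sub>v meas_vec t) X) = mtrace X"
proof -
  have "(\<Sum>(g,t)\<in>carrier G \<times> {..<Suc d}. quad_form (U g *\<^sub>v meas_vec t) X)
      = (\<Sum>g\<in>carrier G. kH * quad_form (\<psi> g) X + kG * mtrace (X * Q))"
    unfolding sum.cartesian_product[symmetric] by (intro sum.cong refl sum_quad_form_meas_vec[OF _ X])
  also have "\<dots> = mtrace (X * P) + mtrace (X * Q)"
    by (simp add: sum.distrib sum_quad_form_\<psi>[OF X] mult.assoc[symmetric] kG_card)
  also have "\<dots> = mtrace X"
    unfolding Q_def mtrace_mult_minus[OF X one_carrier_mat P_carrier] using X by simp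
  finally show ?thesis .
qed

lemma mtrace_\<xi>_Q: "mtrace (ketbra \<xi> * Q) = 0"
proof -
  have k\<xi>: "ketbra \<xi> \<in> carrier_mat d d" using ketbra_carrier[of \<xi>] \<xi>_carrier by simp
  have "(\<Sum>g\<in>carrier G. char_fun U \<xi> g * cnj (char_fun U \<xi> g)) = (\<Sum>g\<in>carrier G. if g \<in> H then 1 else 0)"
    by (rule sum.cong) (use char_H char_not_H in auto)
  also have "\<dots> = of_nat (card H)" using sum_if_H[of 1] by simp
  finally have "mtrace (ketbra \<xi> * P) = 1"
    using quad_form_ketbra[OF \<psi>_carrier \<xi>_carrier] kH_card
    by (simp add: sum_quad_form_\<psi>[OF k\<xi>, symmetric] char_fun_def \<psi>_def sum_distrib_left[symmetric])
  moreover have "mtrace (ketbra \<xi>) = 1"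
    using \<xi>_carrier \<xi>_unit by (simp add: mtrace_def ketbra_def cscalar_prod_expand[of _ d])
  ultimately show ?thesis
    unfolding Q_def mtrace_mult_minus[OF k\<xi> one_carrier_mat P_carrier] using k\<xi> by simp
qed

definition prepared :: "nat \<Rightarrow> 'g \<Rightarrow> complex vec" where
  "prepared M g = kron_vec_pow (U' g *\<^sub>v \<phi>) M"

lemma prepared_carrier: "g \<in> carrier G \<Longrightarrow> prepared M g \<in> carrier_vec (d'^M)"
  unfolding prepared_def by (intro kron_vec_pow_carrier mult_mat_vec_carrier[OF U'_carrier \<phi>_carrier])

lemma prepared_unit: "g \<in> carrier G \<Longrightarrow> prepared M g \<bullet>c prepared M g = 1"
  unfolding prepared_def using U'_carrier \<phi>_carrier d'_pos \<phi>_unit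
    unitary_cscalar_prod[OF proj_unitary_rep_unitary[OF U'_rep] \<phi>_carrier \<phi>_carrier]
  by (intro kron_vec_pow_unit) auto

lemma prepared_covariant:
  assumes h: "h \<in> carrier G" and g: "g \<in> carrier G"
  shows "phase_equiv (kron_pow (U' h) M *\<^sub>v prepared M g) (prepared M (h \<otimes>\<^bsub>G\<^esub> g))"
proof -
  have "U' g *\<^sub>v \<phi> \<in> carrier_vec d'" using U'_carrier[OF g] \<phi>_carrier by simp
  then have "kron_pow (U' h) M *\<^sub>v prepared M g = kron_vec_pow (U' h *\<^sub>v (U' g *\<^sub>v \<phi>)) M"
    unfolding prepared_def by (rule kron_pow_mult_kron_vec_pow[OF U'_carrier[OF h] _ d'_pos])
  then show ?thesis
    unfolding prepared_def
    using phase_equiv_kron_vec_pow[OF proj_unitary_rep_mult_phase[OF G_group U'_rep h g \<phi>_carrier]] by simp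
qed

lemma prepared_H:
  assumes h: "h \<in> H"
  shows "phase_equiv (prepared M h) (kron_vec_pow \<phi> M)"
proof -
  have hG: "h \<in> carrier G" using h H_subset by auto
  have "ketbra \<phi> = ketbra (U' h *\<^sub>v \<phi>)"
    using H_Sym h ketbra_conj[OF U'_carrier[OF hG] \<phi>_carrier] unfolding Sym_def by auto
  then have "phase_equiv \<phi> (U' h *\<^sub>v \<phi>)"
    using phase_equiv_of_ketbra_eq[OF \<phi>_carrier _ \<phi>_unit] U'_carrier[OF hG] \<phi>_carrier by simp
  then show ?thesis
    unfolding prepared_def by (rule phase_equiv_sym[OF phase_equiv_kron_vec_pow])
qed

definition channel :: "nat \<Rightarrow> complex mat \<Rightarrow> complex mat" where
  "channel M = measure_prepare (d'^M) (carrier G \<times> {..<Suc d}) (\<lambda>(g,t). U g *\<^sub>v meas_vec t) (\<lambda>(g,t). prepared M g)"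

lemma channel_CPTP: "CPTP d (d'^M) (channel M)"
  unfolding CPTP_def
proof (intro conjI)
  show "linear_map d (d'^M) (channel M)"
    unfolding channel_def using U_meas_vec_carrier by (intro linear_map_measure_prepare) auto
  show "completely_positive d (d'^M) (channel M)"
    unfolding channel_def using U_meas_vec_carrier prepared_carrier d'_pos
    by (intro completely_positive_measure_prepare) auto
  show "trace_preserving d (channel M)"
    unfolding trace_preserving_def
  proof
    fix X :: "complex mat" assume X: "X \<in> carrier_mat d d"
    have "(\<lambda>(g,t). prepared M g) j \<in> carrier_vec (d'^M) \<and> (\<lambda>(g,t). prepared M g) j \<bullet>c (\<lambda>(g,t). prepared M g) j = 1"
      if "j \<in> carrier G \<times> {..<Suc d}" for j
      using that prepared_carrier prepared_unit by auto
    then show "mtrace (channel M X) = mtrace X"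
      unfolding channel_def using sum_quad_form_meas_vecs[OF X] by (simp add: mtrace_measure_prepare split_beta)
  qed
qed

lemma channel_covariant: "covariant G d U (\<lambda>g. kron_pow (U' g) M) (channel M)"
  unfolding covariant_def
proof (intro ballI)
  fix h and X :: "complex mat" assume h: "h \<in> carrier G" and X: "X \<in> carrier_mat d d"
  show "kron_pow (U' h) M * channel M X * adj (kron_pow (U' h) M) = channel M (U h * X * adj (U h))"
    unfolding channel_def
    using U_meas_vec_carrier prepared_carrier prepared_covariant[OF h]
      proj_unitary_rep_adj_mult_phase[OF G_group U_rep h _ meas_vec_carrier]
    by (intro measure_prepare_covariant[OF G_group h U_carrier[OF h] kron_pow_carrier[OF U'_carrier[OF h]] _ _ X])
       auto
qed

lemma channel_\<xi>: "channel M (ketbra \<xi>) = kron_pow (ketbra \<phi>) M"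
proof -
  define w where "w = kron_vec_pow \<phi> M"
  have dim_w: "dim_vec w = d'^M" unfolding w_def using \<phi>_carrier by simp
  have k\<xi>: "ketbra \<xi> \<in> carrier_mat d d" using ketbra_carrier[of \<xi>] \<xi>_carrier by simp
  have weight: "(\<Sum>t<Suc d. quad_form (U g *\<^sub>v meas_vec t) (ketbra \<xi>)) = (if g \<in> H then kH else 0)"
    if g: "g \<in> carrier G" for g
    using sum_quad_form_meas_vec[OF g k\<xi>] mtrace_\<xi>_Q quad_form_ketbra[OF \<psi>_carrier[OF g] \<xi>_carrier]
      char_H char_not_H g
    unfolding char_fun_def \<psi>_def by auto
  have "channel M (ketbra \<xi>) $$ (p,q) = w $ p * cnj (w $ q)" if p: "p < d'^M" and q: "q < d'^M" for p q
  proof -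
    have "channel M (ketbra \<xi>) $$ (p,q)
        = (\<Sum>g\<in>carrier G. (\<Sum>t<Suc d. quad_form (U g *\<^sub>v meas_vec t) (ketbra \<xi>))
                              * (prepared M g $ p * cnj (prepared M g $ q)))"
      unfolding channel_def measure_prepare_def using p q
      by (simp add: sum.cartesian_product' sum_distrib_right distrib_right)
    also have "\<dots> = (\<Sum>g\<in>carrier G. if g \<in> H then kH * (w $ p * cnj (w $ q)) else 0)"
      using p q dim_w weight H_subset
      by (intro sum.cong refl) (auto intro!: phase_equiv_outer_entry simp: w_def prepared_H)
    also have "\<dots> = w $ p * cnj (w $ q)"
      unfolding sum_if_H mult.assoc[symmetric] kH_card[unfolded mult.commute[of kH]] by simp
    finally show ?thesis .
  qed
  moreover have "kron_pow (ketbra \<phi>) M = ketbra w"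
    unfolding w_def using ketbra_kron_vec_pow \<phi>_carrier d'_pos by simp
  moreover have "channel M (ketbra \<xi>) \<in> carrier_mat (d'^M) (d'^M)" unfolding channel_def by simp
  ultimately show ?thesis
    using dim_w by (auto simp: ketbra_def intro!: eq_matI)
qed

end

theorem mainTheorem7:
  fixes G :: "('g, 'b) monoid_scheme" and H :: "'g set"
    and d d' :: nat and U U' :: "'g \<Rightarrow> complex mat" and \<xi> \<phi> :: "complex vec"
  assumes "group G" and "finite (carrier G)" and "subgroup H G"
    and "proj_unitary_rep G d U" and "pure_state d \<xi>"
    and "\<forall>g\<in>H. char_fun U \<xi> g = 1"
    and "\<forall>g\<in>carrier G - H. char_fun U \<xi> g = 0"
    and "proj_unitary_rep G d' U'" and "pure_state d' \<phi>"
    and "H \<subseteq> Sym G U' \<phi>"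
  shows "\<forall>M::nat. M > 0 \<longrightarrow>
    (\<exists>\<Lambda>. CPTP d (d' ^ M) \<Lambda>
        \<and> covariant G d U (\<lambda>g. kron_pow (U' g) M) \<Lambda>
        \<and> \<Lambda> (ketbra \<xi>) = kron_pow (ketbra \<phi>) M)"
proof (intro allI impI)
  fix M :: nat \<comment> \<open>the construction works for M = 0 as well\<close>
  interpret uniform_state_conversion G H d d' U U' \<xi> \<phi>
    by (intro uniform_state_conversion.intro) (rule assms)+
  show "\<exists>\<Lambda>. CPTP d (d' ^ M) \<Lambda> \<and> covariant G d U (\<lambda>g. kron_pow (U' g) M) \<Lambda>
           \<and> \<Lambda> (ketbra \<xi>) = kron_pow (ketbra \<phi>) M"
    using channel_CPTP channel_covariant channel_\<xi> by blast
qed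

end
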